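(* Let $A_1,\ldots,A_k$ and $B_1,\ldots,B_k$ be $n\times n$ Hermitian matrices with $mI\le A_i,B_i\le MI$ for $i=1,\ldots,k$ and some scalars $0<m<M$, and let $w_1,\ldots,w_k$ be positive scalars with $\sum_{i=1}^kw_i=1$. Then $$\left(\sum_{i=1}^kw_iA_i^2\right)^{1/2}+\left(\sum_{i=1}^kw_iB_i^2\right)^{1/2}\le\frac{M+m}{2\sqrt{Mm}}\left(\sum_{i=1}^kw_i(A_i+B_i)^2\right)^{1/2}$$ and $$\left(\sum_{i=1}^kw_iA_i^2\right)^{1/2}+\left(\sum_{i=1}^kw_iB_i^2\right)^{1/2}\le\frac{(M-m)^2}{2(M+m)}I+\left(\sum_{i=1}^kw_i(A_i+B_i)^2\right)^{1/2}.$$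
   Context: $\le$ is the Löwner order on Hermitian matrices. *)

theory Defs
  imports "HOL-Analysis.Analysis"
begin

definition adjoint_mat :: "complex^'n^'n \<Rightarrow> complex^'n^'n" where
  "adjoint_mat A = (\<chi> i j. cnj (A $ j $ i))"

definition hermitian :: "complex^'n^'n \<Rightarrow> bool" where
  "hermitian A \<longleftrightarrow> adjoint_mat A = A"

definition qform :: "complex^'n^'n \<Rightarrow> complex^'n \<Rightarrow> complex" where
  "qform A x = (\<Sum>i\<in>UNIV. cnj (x $ i) * ((A *v x) $ i))"

definition psd :: "complex^'n^'n \<Rightarrow> bool" where
  "psd A \<longleftrightarrow> hermitian A \<and> (\<forall>x. 0 \<le> Re (qform A x))"

definition loewner_le :: "complex^'n^'n \<Rightarrow> complex^'n^'n \<Rightarrow> bool" (infix \<open>\<le>\<^sub>L\<close> 50) where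
  "A \<le>\<^sub>L B \<longleftrightarrow> hermitian A \<and> hermitian B \<and> psd (B - A)"

definition msqrt :: "complex^'n^'n \<Rightarrow> complex^'n^'n" where
  "msqrt A = (THE B. psd B \<and> B ** B = A)"

end

theory Submission
  imports Defs
begin

text \<open>Write \<open>X = \<Sum> w\<^sub>i A\<^sub>i\<^sup>2\<close> and \<open>A' = \<Sum> w\<^sub>i A\<^sub>i\<close>. The bounds \<open>m \<le> A\<^sub>i \<le> M\<close> give
  \<open>A\<^sub>i\<^sup>2 \<le> (M + m) A\<^sub>i - M m\<close>, hence \<open>X \<le> (M + m) A' - M m\<close>. Completing the square,
  \<open>(M + m) A' - M m\<close> lies below both \<open>(c A')\<^sup>2\<close> and \<open>(A' + d)\<^sup>2\<close>, where
  \<open>c = (M + m) / (2 sqrt (M m))\<close> and \<open>d = (M - m)\<^sup>2 / (4 (M + m))\<close>. Since the square root is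
  operator monotone, \<open>msqrt X \<le> c A'\<close> and \<open>msqrt X \<le> A' + d\<close>; likewise for the \<open>B\<^sub>i\<close>.
  Finally \<open>A' + B'\<close> is below the square root of \<open>\<Sum> w\<^sub>i (A\<^sub>i + B\<^sub>i)\<^sup>2\<close>, because
  \<open>t \<mapsto> t\<^sup>2\<close> is operator convex and the square root is operator monotone.
  Adding the bounds for the two families gives both inequalities.\<close>

lemma quadratic_nonneg_imp_discriminant_le:
  fixes a b c :: real
  assumes "\<And>t. 0 \<le> a + 2 * t * b + t^2 * c" and "0 \<le> c"
  shows "b^2 \<le> a * c"
proof (cases "c = 0")
  case True
  have "b = 0"
  proof (rule ccontr)
    assume "b \<noteq> 0"
    have "0 \<le> a + 2 * (- (a + 1) / (2 * b)) * b"
      using assms(1)[of "- (a + 1) / (2 * b)"] True by simp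
    also have "\<dots> = -1"
      using \<open>b \<noteq> 0\<close> by (simp add: field_simps)
    finally show False by simp
  qed
  then show ?thesis using True by simp
next
  case False
  then have "c > 0" using assms(2) by simp
  have "0 \<le> a + 2 * (- b / c) * b + (- b / c)^2 * c" by (rule assms(1))
  also have "\<dots> = a - b^2 / c"
    using \<open>c > 0\<close> by (simp add: field_simps power2_eq_square)
  finally show ?thesis
    using \<open>c > 0\<close> by (simp add: field_simps)
qed

lemma power2_norm_diff_scaleR:
  fixes a x :: "'a::real_inner"
  shows "(norm (a - t *\<^sub>R x))^2 = (norm a)^2 - 2 * t * inner a x + t^2 * (norm x)^2"
  unfolding power2_norm_eq_inner
  by (simp add: inner_diff_left inner_diff_right inner_commute power2_eq_square algebra_simps)

lemma power2_norm_weighted_sum_le: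
  fixes v :: "'i \<Rightarrow> 'a::real_normed_vector"
  assumes w: "\<And>i. i \<in> I \<Longrightarrow> 0 \<le> w i" and sum_w: "sum w I = 1"
  shows "(norm (\<Sum>i\<in>I. w i *\<^sub>R v i))^2 \<le> (\<Sum>i\<in>I. w i * (norm (v i))^2)"
proof -
  have "finite I" "I \<noteq> {}"
    using sum_w sum.infinite by force+
  have "norm (\<Sum>i\<in>I. w i *\<^sub>R v i) \<le> (\<Sum>i\<in>I. norm (w i *\<^sub>R v i))"
    by (rule norm_sum)
  also have "\<dots> = (\<Sum>i\<in>I. w i * norm (v i))"
    using w by (intro sum.cong) simp_all
  finally have "norm (\<Sum>i\<in>I. w i *\<^sub>R v i) \<le> (\<Sum>i\<in>I. w i * norm (v i))" .
  then have "(norm (\<Sum>i\<in>I. w i *\<^sub>R v i))^2 \<le> (\<Sum>i\<in>I. w i * norm (v i))^2"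
    by (simp add: power_mono)
  also have "\<dots> \<le> (\<Sum>i\<in>I. w i * (norm (v i))^2)"
    using convex_on_sum[OF \<open>finite I\<close> \<open>I \<noteq> {}\<close> convex_power2 sum_w, of "\<lambda>i. norm (v i)"] w
    by simp
  finally show ?thesis .
qed

section \<open>Quadratic forms and the Loewner order\<close>

definition cinner :: "complex^'n \<Rightarrow> complex^'n \<Rightarrow> complex" where
  "cinner x y = (\<Sum>i\<in>UNIV. cnj (x $ i) * y $ i)"

definition quad_form :: "complex^'n^'n \<Rightarrow> complex^'n \<Rightarrow> real" where
  "quad_form A x = inner x (A *v x)"

lemma Re_cinner: "Re (cinner x y) = inner x y"
  by (simp add: cinner_def inner_vec_def inner_complex_def)

lemma Re_qform: "Re (qform A x) = quad_form A x"
  by (simp add: qform_def quad_form_def inner_vec_def inner_complex_def)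

lemma cinner_adjoint_mat: "cinner x (A *v y) = cinner (adjoint_mat A *v x) y"
proof -
  have "cinner x (A *v y) = (\<Sum>i\<in>UNIV. \<Sum>k\<in>UNIV. cnj (x $ i) * A $ i $ k * y $ k)"
    by (simp add: cinner_def matrix_vector_mult_def sum_distrib_left mult.assoc)
  also have "\<dots> = (\<Sum>k\<in>UNIV. \<Sum>i\<in>UNIV. cnj (x $ i) * A $ i $ k * y $ k)"
    by (rule sum.swap)
  also have "\<dots> = cinner (adjoint_mat A *v x) y"
    by (simp add: cinner_def matrix_vector_mult_def adjoint_mat_def sum_distrib_left
        sum_distrib_right mult_ac)
  finally show ?thesis .
qed

lemma cinner_hermitian: "hermitian A \<Longrightarrow> cinner x (A *v y) = cinner (A *v x) y"
  by (simp add: cinner_adjoint_mat hermitian_def)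

lemma inner_hermitian: "hermitian A \<Longrightarrow> inner x (A *v y) = inner (A *v x) y"
  by (metis Re_cinner cinner_hermitian)

lemma cinner_zero_right [simp]: "cinner x 0 = 0"
  by (simp add: cinner_def)

lemma cinner_add_right: "cinner x (y + z) = cinner x y + cinner x z"
  by (simp add: cinner_def distrib_left sum.distrib)

lemma vector_scaleR_component_complex: "((r::real) *\<^sub>R (y::complex^'n)) $ i = of_real r * y $ i"
  by (subst vector_scaleR_component) (rule scaleR_conv_of_real)

lemma cinner_scaleR_right: "cinner x (r *\<^sub>R y) = of_real r * cinner x y"
  by (simp only: cinner_def vector_scaleR_component_complex sum_distrib_left) (simp add: mult_ac)

lemma cinner_scaleR_left: "cinner (r *\<^sub>R x) y = of_real r * cinner x y"
  by (simp only: cinner_def vector_scaleR_component_complex sum_distrib_left) (simp add: mult_ac)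

lemma cnj_cinner: "cnj (cinner x y) = cinner y x"
  by (simp add: cinner_def mult.commute)

lemma cinner_self: "cinner x x = of_real ((norm x)^2)"
proof -
  have "Im (cinner x x) = (\<Sum>i\<in>UNIV. Im (cnj (x $ i) * x $ i))"
    by (simp add: cinner_def)
  also have "\<dots> = 0"
    by (simp add: mult.commute)
  finally show ?thesis
    by (simp add: complex_eq_iff Re_cinner power2_norm_eq_inner)
qed

lemma adjoint_mat_adjoint_mat [simp]: "adjoint_mat (adjoint_mat A) = A"
  by (simp add: adjoint_mat_def vec_eq_iff)

lemma adjoint_mat_mult: "adjoint_mat (A ** B) = adjoint_mat B ** adjoint_mat A"
  by (simp add: adjoint_mat_def vec_eq_iff matrix_matrix_mult_def mult.commute)

lemma adjoint_mat_add: "adjoint_mat (A + B) = adjoint_mat A + adjoint_mat B"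
  by (simp add: adjoint_mat_def vec_eq_iff)

lemma adjoint_mat_diff: "adjoint_mat (A - B) = adjoint_mat A - adjoint_mat B"
  by (simp add: adjoint_mat_def vec_eq_iff)

lemma adjoint_mat_scaleR: "adjoint_mat (r *\<^sub>R A) = r *\<^sub>R adjoint_mat A"
  by (simp add: adjoint_mat_def vec_eq_iff)

lemma hermitian_add: "hermitian A \<Longrightarrow> hermitian B \<Longrightarrow> hermitian (A + B)"
  by (simp add: hermitian_def adjoint_mat_add)

lemma hermitian_diff: "hermitian A \<Longrightarrow> hermitian B \<Longrightarrow> hermitian (A - B)"
  by (simp add: hermitian_def adjoint_mat_diff)

lemma hermitian_scaleR: "hermitian A \<Longrightarrow> hermitian (r *\<^sub>R A)"
  by (simp add: hermitian_def adjoint_mat_scaleR)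

lemma hermitian_mat_1: "hermitian (mat 1)"
  by (simp add: hermitian_def adjoint_mat_def vec_eq_iff mat_def)

lemma hermitian_sum: "(\<And>i. i \<in> S \<Longrightarrow> hermitian (f i)) \<Longrightarrow> hermitian (sum f S)"
proof (induction S rule: infinite_finite_induct)
  case (insert x F)
  then show ?case by (simp add: hermitian_add)
qed (simp_all add: hermitian_def adjoint_mat_def vec_eq_iff)

lemma hermitian_square: "hermitian A \<Longrightarrow> hermitian (A ** A)"
  by (simp add: hermitian_def adjoint_mat_mult)

lemma hermitian_unitary_conj: "hermitian D \<Longrightarrow> hermitian (U ** D ** adjoint_mat U)"
  by (simp add: hermitian_def adjoint_mat_mult matrix_mul_assoc)

lemma scaleR_matrix_vector_mult: "((r::real) *\<^sub>R (A::complex^'n^'m)) *v x = r *\<^sub>R (A *v x)"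
  by (simp add: vec_eq_iff matrix_vector_mult_def scaleR_sum_right)

lemma matrix_vector_mult_scaleR_complex: "(A::complex^'n^'m) *v ((r::real) *\<^sub>R x) = r *\<^sub>R (A *v x)"
  by (simp add: vec_eq_iff matrix_vector_mult_def scaleR_sum_right)

lemma sum_matrix_vector_mult: "(sum f S) *v (x::complex^'n) = (\<Sum>i\<in>S. f i *v x)"
  by (induction S rule: infinite_finite_induct) (simp_all add: matrix_vector_mult_add_rdistrib)

lemma quad_form_add: "quad_form (A + B) x = quad_form A x + quad_form B x"
  by (simp add: quad_form_def matrix_vector_mult_add_rdistrib inner_add_right)

lemma quad_form_diff: "quad_form (A - B) x = quad_form A x - quad_form B x"
  by (simp add: quad_form_def matrix_vector_mult_diff_rdistrib inner_diff_right)

lemma quad_form_scaleR: "quad_form (r *\<^sub>R A) x = r * quad_form A x"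
  by (simp add: quad_form_def scaleR_matrix_vector_mult)

lemma quad_form_sum: "quad_form (sum f S) x = (\<Sum>i\<in>S. quad_form (f i) x)"
  by (simp add: quad_form_def sum_matrix_vector_mult inner_sum_right)

lemma quad_form_mat_1: "quad_form (mat 1) x = (norm x)^2"
  by (simp add: quad_form_def power2_norm_eq_inner)

lemma quad_form_square: "hermitian A \<Longrightarrow> quad_form (A ** A) x = (norm (A *v x))^2"
  by (simp add: quad_form_def inner_hermitian power2_norm_eq_inner flip: matrix_vector_mul_assoc)

lemma quad_form_scaleR_vector: "quad_form A (r *\<^sub>R y) = r^2 * quad_form A y"
  by (simp add: quad_form_def matrix_vector_mult_scaleR_complex power2_eq_square)

lemma quad_form_add_vector:
  assumes "hermitian A"
  shows "quad_form A (u + t *\<^sub>R y) = quad_form A u + 2 * t * inner (A *v u) y + t^2 * quad_form A y"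
  using inner_hermitian[OF assms, of u y]
  by (simp add: quad_form_def matrix_vector_mult_scaleR_complex inner_commute power2_eq_square
      algebra_simps)

lemma continuous_on_quad_form: "continuous_on S (quad_form (A::complex^'n^'n))"
proof -
  have "bounded_linear (\<lambda>x::complex^'n. A *v x)"
    using matrix_vector_mul_linear linear_conv_bounded_linear by blast
  then show ?thesis
    unfolding quad_form_def by (intro continuous_intros linear_continuous_on)
qed

lemma psd_iff_quad_form: "psd A \<longleftrightarrow> hermitian A \<and> (\<forall>x. 0 \<le> quad_form A x)"
  by (simp add: psd_def Re_qform)

lemma loewner_le_iff_quad_form:
  "A \<le>\<^sub>L B \<longleftrightarrow> hermitian A \<and> hermitian B \<and> (\<forall>x. quad_form A x \<le> quad_form B x)"
  by (auto simp: loewner_le_def psd_iff_quad_form hermitian_diff quad_form_diff)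

lemma loewner_le_refl: "hermitian A \<Longrightarrow> A \<le>\<^sub>L A"
  by (simp add: loewner_le_iff_quad_form)

lemma loewner_le_trans [trans]: "A \<le>\<^sub>L B \<Longrightarrow> B \<le>\<^sub>L C \<Longrightarrow> A \<le>\<^sub>L C"
  by (meson loewner_le_iff_quad_form order_trans)

lemma loewner_le_add: "A \<le>\<^sub>L B \<Longrightarrow> C \<le>\<^sub>L D \<Longrightarrow> A + C \<le>\<^sub>L B + D"
  by (simp add: loewner_le_iff_quad_form hermitian_add quad_form_add add_mono)

lemma loewner_le_scaleR: "0 \<le> c \<Longrightarrow> A \<le>\<^sub>L B \<Longrightarrow> c *\<^sub>R A \<le>\<^sub>L c *\<^sub>R B"
  by (simp add: loewner_le_iff_quad_form hermitian_scaleR quad_form_scaleR mult_left_mono)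

lemma loewner_le_weighted_sum:
  assumes "\<And>i. i \<in> I \<Longrightarrow> 0 \<le> w i" and "\<And>i. i \<in> I \<Longrightarrow> A i \<le>\<^sub>L B i"
  shows "(\<Sum>i\<in>I. w i *\<^sub>R A i) \<le>\<^sub>L (\<Sum>i\<in>I. w i *\<^sub>R B i)"
  using assms unfolding loewner_le_iff_quad_form quad_form_sum quad_form_scaleR
  by (auto intro!: hermitian_sum hermitian_scaleR sum_mono mult_left_mono)

lemma psd_iff_zero_loewner_le: "psd A \<longleftrightarrow> 0 \<le>\<^sub>L A"
  by (auto simp: loewner_le_def psd_def hermitian_def adjoint_mat_def vec_eq_iff)

lemma psd_add: "psd A \<Longrightarrow> psd B \<Longrightarrow> psd (A + B)"
  by (simp add: psd_iff_quad_form hermitian_add quad_form_add)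

lemma psd_scaleR: "0 \<le> c \<Longrightarrow> psd A \<Longrightarrow> psd (c *\<^sub>R A)"
  by (simp add: psd_iff_quad_form hermitian_scaleR quad_form_scaleR)

lemma psd_sum: "(\<And>i. i \<in> I \<Longrightarrow> psd (A i)) \<Longrightarrow> psd (sum A I)"
  by (simp add: psd_iff_quad_form hermitian_sum quad_form_sum sum_nonneg)

lemma psd_mat_1: "psd (mat 1)"
  by (simp add: psd_iff_quad_form hermitian_mat_1 quad_form_mat_1)

lemma psd_square: "hermitian A \<Longrightarrow> psd (A ** A)"
  by (simp add: psd_iff_quad_form hermitian_square quad_form_square)

lemma psd_of_scaleR_mat_1_le: "0 \<le> m \<Longrightarrow> m *\<^sub>R mat 1 \<le>\<^sub>L A \<Longrightarrow> psd A"
  by (meson loewner_le_trans psd_iff_zero_loewner_le psd_mat_1 psd_scaleR)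

lemma scaleR_mat_1_le_weighted_sum:
  assumes "\<And>i. i \<in> I \<Longrightarrow> 0 \<le> w i" and "sum w I = 1" and "\<And>i. i \<in> I \<Longrightarrow> m *\<^sub>R mat 1 \<le>\<^sub>L A i"
  shows "m *\<^sub>R mat 1 \<le>\<^sub>L (\<Sum>i\<in>I. w i *\<^sub>R A i)"
proof -
  have "(\<Sum>i\<in>I. w i *\<^sub>R (m *\<^sub>R mat 1)) \<le>\<^sub>L (\<Sum>i\<in>I. w i *\<^sub>R A i)"
    by (rule loewner_le_weighted_sum[OF assms(1,3)])
  then show ?thesis
    by (simp only: flip: scaleR_sum_left) (simp add: assms(2))
qed

section \<open>Spectral theorem\<close>

lemma quad_form_attains_min_on_unit_sphere:
  fixes D :: "complex^'n^'n"
  assumes sub: "subspace W" and nontriv: "W \<noteq> {0}"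
  shows "\<exists>u\<in>W. norm u = 1 \<and> (\<forall>y\<in>W. quad_form D u * (norm y)^2 \<le> quad_form D y)"
proof -
  define S where "S = W \<inter> sphere 0 1"
  have "compact S"
    unfolding S_def using closed_subspace[OF sub] by (intro closed_Int_compact compact_sphere)
  obtain x0 where "x0 \<in> W" "x0 \<noteq> 0"
    using nontriv sub subspace_0 by blast
  then have "(1 / norm x0) *\<^sub>R x0 \<in> S"
    using sub by (auto simp: S_def subspace_scale)
  then have "S \<noteq> {}" by blast
  obtain u where uS: "u \<in> S" and umin: "\<And>y. y \<in> S \<Longrightarrow> quad_form D u \<le> quad_form D y"
    using continuous_attains_inf[OF \<open>compact S\<close> \<open>S \<noteq> {}\<close> continuous_on_quad_form] by blast
  have "quad_form D u * (norm y)^2 \<le> quad_form D y" if "y \<in> W" for y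
  proof (cases "y = 0")
    case True
    then show ?thesis by (simp add: quad_form_def)
  next
    case False
    then have "(1 / norm y) *\<^sub>R y \<in> S"
      using that sub by (auto simp: S_def subspace_scale)
    from umin[OF this] have "quad_form D u \<le> (1 / norm y)^2 * quad_form D y"
      by (simp add: quad_form_scaleR_vector)
    then show ?thesis
      using False by (simp add: field_simps power2_eq_square)
  qed
  with uS show ?thesis
    by (auto simp: S_def)
qed

text \<open>The first-order condition at a minimiser of the Rayleigh quotient on an invariant subspace
  is the eigenvalue equation.\<close>

lemma hermitian_min_quad_form_eigenvector:
  fixes D :: "complex^'n^'n"
  assumes herm: "hermitian D" and sub: "subspace W" and inv: "\<And>x. x \<in> W \<Longrightarrow> D *v x \<in> W"
    and uW: "u \<in> W" and un: "norm u = 1"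
    and low: "\<And>y. y \<in> W \<Longrightarrow> quad_form D u * (norm y)^2 \<le> quad_form D y"
  shows "D *v u = quad_form D u *\<^sub>R u"
proof -
  define G where "G = D - quad_form D u *\<^sub>R mat 1"
  have hG: "hermitian G"
    unfolding G_def by (intro hermitian_diff hermitian_scaleR hermitian_mat_1 herm)
  have qG: "quad_form G y = quad_form D y - quad_form D u * (norm y)^2" for y
    by (simp add: G_def quad_form_diff quad_form_scaleR quad_form_mat_1)
  have Gu: "G *v u = D *v u - quad_form D u *\<^sub>R u"
    by (simp add: G_def matrix_vector_mult_diff_rdistrib scaleR_matrix_vector_mult)
  have "inner (G *v u) y = 0" if "y \<in> W" for y
  proof -
    have "(inner (G *v u) y)^2 \<le> quad_form G u * quad_form G y"
    proof (rule quadratic_nonneg_imp_discriminant_le)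
      fix t :: real
      have "u + t *\<^sub>R y \<in> W"
        using uW that sub by (simp add: subspace_add subspace_scale)
      then have "0 \<le> quad_form G (u + t *\<^sub>R y)"
        using low[of "u + t *\<^sub>R y"] by (simp add: qG)
      then show "0 \<le> quad_form G u + 2 * t * inner (G *v u) y + t^2 * quad_form G y"
        by (simp add: quad_form_add_vector[OF hG])
      show "0 \<le> quad_form G y"
        using low[OF that] by (simp add: qG)
    qed
    then show ?thesis
      using un by (simp add: qG)
  qed
  moreover have "G *v u \<in> W"
    unfolding Gu using uW inv sub by (simp add: subspace_diff subspace_scale)
  ultimately have "G *v u = 0"
    by (metis inner_eq_zero_iff)
  then show ?thesis
    by (simp add: Gu)
qed

definition orthonormal_on :: "'i set \<Rightarrow> ('i \<Rightarrow> complex^'n) \<Rightarrow> bool" where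
  "orthonormal_on F v \<longleftrightarrow> (\<forall>i\<in>F. \<forall>j\<in>F. cinner (v i) (v j) = (if i = j then 1 else 0))"

lemma exists_nonzero_cinner_orthogonal:
  fixes v :: "'i \<Rightarrow> complex^'n"
  assumes "finite F" and "card F < CARD('n)"
  shows "\<exists>x. x \<noteq> 0 \<and> (\<forall>i\<in>F. cinner (v i) x = 0)"
proof -
  \<comment> \<open>complex orthogonality to \<open>v i\<close> is real orthogonality to both \<open>v i\<close> and \<open>\<i> v i\<close>\<close>
  define iv where "iv i = (\<chi> j. \<i> * v i $ j)" for i
  define S where "S = v ` F \<union> iv ` F"
  have "dim S \<le> card S"
    by (rule dim_le_card') (simp add: S_def assms(1))
  also have "\<dots> \<le> card (v ` F) + card (iv ` F)"
    unfolding S_def by (rule card_Un_le)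
  also have "\<dots> \<le> card F + card F"
    by (intro add_mono card_image_le assms(1))
  also have "\<dots> < DIM(complex^'n)"
    using assms(2) by simp
  finally obtain x where x: "x \<noteq> 0" "\<And>y. y \<in> span S \<Longrightarrow> orthogonal x y"
    using orthogonal_to_subspace_exists by blast
  have "cinner (v i) x = 0" if "i \<in> F" for i
  proof -
    have "Re (cinner (v i) x) = 0" "Re (cinner (iv i) x) = 0"
      using x(2)[of "v i"] x(2)[of "iv i"] that
      by (auto simp: S_def orthogonal_def Re_cinner inner_commute intro: span_base)
    moreover have "cinner (iv i) x = - \<i> * cinner (v i) x"
      by (simp add: cinner_def iv_def sum_distrib_left mult_ac)
    ultimately show ?thesis
      by (simp add: complex_eq_iff)
  qed
  with x(1) show ?thesis by blast
qed

lemma hermitian_orthonormal_eigenvectors_on: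
  fixes H :: "complex^'n^'n" and F :: "'n set"
  assumes herm: "hermitian H"
  shows "\<exists>v lam. orthonormal_on F v \<and> (\<forall>i\<in>F. H *v v i = lam i *\<^sub>R v i)"
proof -
  have "finite F" by simp
  then show ?thesis
  proof (induction F rule: finite_induct)
    case empty
    then show ?case by (simp add: orthonormal_on_def)
  next
    case (insert a F)
    then obtain v lam where orth: "orthonormal_on F v" and eig: "\<forall>i\<in>F. H *v v i = lam i *\<^sub>R v i"
      by blast
    define W where "W = {x. \<forall>i\<in>F. cinner (v i) x = 0}"
    have sub: "subspace W"
      unfolding subspace_def W_def by (simp add: cinner_add_right cinner_scaleR_right)
    have inv: "H *v x \<in> W" if "x \<in> W" for x
      using that eig by (simp add: W_def cinner_hermitian[OF herm] cinner_scaleR_left)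
    have "card F < CARD('n)"
      using card_mono[of UNIV "insert a F"] insert by simp
    then obtain x0 where "x0 \<noteq> 0" "x0 \<in> W"
      using exists_nonzero_cinner_orthogonal[of F v] insert by (auto simp: W_def)
    then have "W \<noteq> {0}" by blast
    then obtain u where u: "u \<in> W" "norm u = 1"
      and low: "\<forall>y\<in>W. quad_form H u * (norm y)^2 \<le> quad_form H y"
      using quad_form_attains_min_on_unit_sphere[OF sub] by blast
    define l where "l = quad_form H u"
    have "H *v u = l *\<^sub>R u"
      unfolding l_def using low by (intro hermitian_min_quad_form_eigenvector[OF herm sub inv u]) auto
    have "cinner (v i) u = 0" "cinner u (v i) = 0" if "i \<in> F" for i
      using u(1) that by (auto simp: W_def simp flip: cnj_cinner[of "v i" u])
    then have "orthonormal_on (insert a F) (v(a := u))"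
      using orth u(2) insert.hyps(2) cinner_self[of u] by (auto simp: orthonormal_on_def)
    moreover have "\<forall>i\<in>insert a F. H *v (v(a := u)) i = (lam(a := l)) i *\<^sub>R (v(a := u)) i"
      using eig \<open>H *v u = l *\<^sub>R u\<close> insert.hyps(2) by auto
    ultimately show ?case by blast
  qed
qed

corollary hermitian_orthonormal_eigenbasis:
  fixes H :: "complex^'n^'n"
  assumes "hermitian H"
  obtains v :: "'n \<Rightarrow> complex^'n" and lam where "orthonormal_on UNIV v" "\<And>i. H *v v i = lam i *\<^sub>R v i"
  using hermitian_orthonormal_eigenvectors_on[OF assms, of UNIV] by blast

definition cols_mat :: "('n \<Rightarrow> complex^'m) \<Rightarrow> complex^'n^'m" where
  "cols_mat v = (\<chi> i j. v j $ i)"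

definition diag_mat :: "('n \<Rightarrow> real) \<Rightarrow> complex^'n^'n" where
  "diag_mat d = (\<chi> i j. if i = j then of_real (d i) else 0)"

lemma cols_mat_unitary:
  assumes "orthonormal_on UNIV v"
  shows "adjoint_mat (cols_mat v) ** cols_mat v = mat 1" "cols_mat v ** adjoint_mat (cols_mat v) = mat 1"
proof -
  show 1: "adjoint_mat (cols_mat v) ** cols_mat v = mat 1"
    using assms by (simp add: orthonormal_on_def vec_eq_iff matrix_matrix_mult_def adjoint_mat_def
        cols_mat_def mat_def cinner_def)
  then show "cols_mat v ** adjoint_mat (cols_mat v) = mat 1"
    using matrix_left_right_inverse by blast
qed

lemma matrix_mult_cols_mat: "A ** cols_mat v = cols_mat (\<lambda>j. A *v v j)"
  by (simp add: vec_eq_iff cols_mat_def matrix_matrix_mult_def matrix_vector_mult_def)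

lemma cols_mat_mult_diag_mat: "cols_mat v ** diag_mat d = cols_mat (\<lambda>j. d j *\<^sub>R v j)"
proof -
  have "(\<Sum>k\<in>UNIV. v k $ i * (if k = j then of_real (d k) else 0))
        = (\<Sum>k\<in>UNIV. if k = j then of_real (d j) * v j $ i else 0)" for i j
    by (intro sum.cong) auto
  then show ?thesis
    by (simp add: vec_eq_iff cols_mat_def diag_mat_def matrix_matrix_mult_def
        vector_scaleR_component_complex del: vector_scaleR_component)
qed

lemma diag_mat_mult: "diag_mat a ** diag_mat b = diag_mat (\<lambda>i. a i * b i)"
proof -
  have "(\<Sum>k\<in>UNIV. (if i = k then of_real (a i) else 0) * (if k = j then of_real (b k) else (0::complex)))
        = (\<Sum>k\<in>UNIV. if k = i then (if i = j then of_real (a i * b i) else 0) else 0)" for i j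
    by (intro sum.cong) auto
  then show ?thesis
    by (simp add: vec_eq_iff matrix_matrix_mult_def diag_mat_def)
qed

lemma psd_diag_mat:
  assumes "\<And>i. 0 \<le> d i"
  shows "psd (diag_mat d)"
proof -
  have "diag_mat d *v y = (\<chi> i. d i *\<^sub>R y $ i)" for y
    by (simp add: vec_eq_iff matrix_vector_mult_def diag_mat_def scaleR_conv_of_real if_distrib
        if_distribR cong: if_cong)
  then have "quad_form (diag_mat d) y = (\<Sum>i\<in>UNIV. d i * (norm (y $ i))^2)" for y
    by (simp add: quad_form_def inner_vec_def power2_norm_eq_inner)
  moreover have "hermitian (diag_mat d)"
    by (simp add: hermitian_def adjoint_mat_def diag_mat_def vec_eq_iff)
  ultimately show ?thesis
    using assms by (simp add: psd_iff_quad_form sum_nonneg)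
qed

lemma quad_form_unitary_conj: "quad_form (U ** D ** adjoint_mat U) x = quad_form D (adjoint_mat U *v x)"
proof -
  have "quad_form (U ** D ** adjoint_mat U) x = Re (cinner x (U *v (D *v (adjoint_mat U *v x))))"
    by (simp add: Re_cinner quad_form_def flip: matrix_vector_mul_assoc)
  also have "\<dots> = quad_form D (adjoint_mat U *v x)"
    by (simp only: cinner_adjoint_mat[of x U]) (simp add: Re_cinner quad_form_def)
  finally show ?thesis .
qed

lemma psd_unitary_conj: "psd D \<Longrightarrow> psd (U ** D ** adjoint_mat U)"
  by (simp add: psd_iff_quad_form hermitian_unitary_conj quad_form_unitary_conj)

section \<open>Positive semidefinite square roots\<close>

lemma orthonormal_on_nonzero: "orthonormal_on F v \<Longrightarrow> i \<in> F \<Longrightarrow> v i \<noteq> 0"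
  by (force simp: orthonormal_on_def cinner_self)

lemma psd_eigenvalue_nonneg:
  assumes "psd Q" and "u \<noteq> 0" and "Q *v u = l *\<^sub>R u"
  shows "0 \<le> l"
proof -
  have "0 \<le> quad_form Q u"
    using assms(1) by (simp add: psd_iff_quad_form)
  also have "quad_form Q u = l * (norm u)^2"
    using assms(3) by (simp add: quad_form_def power2_norm_eq_inner)
  finally show ?thesis
    using assms(2) by (simp add: zero_le_mult_iff)
qed

lemma hermitian_eq_diag_conj:
  assumes "orthonormal_on UNIV v" and "\<And>i. H *v v i = lam i *\<^sub>R v i"
  shows "H = cols_mat v ** diag_mat lam ** adjoint_mat (cols_mat v)"
proof -
  have "H ** cols_mat v = cols_mat v ** diag_mat lam"
    using assms(2) by (simp add: matrix_mult_cols_mat cols_mat_mult_diag_mat)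
  then have "H ** (cols_mat v ** adjoint_mat (cols_mat v))
             = cols_mat v ** diag_mat lam ** adjoint_mat (cols_mat v)"
    by (simp add: matrix_mul_assoc)
  then show ?thesis
    using cols_mat_unitary(2)[OF assms(1)] by simp
qed

lemma psd_of_eigenvalues_nonneg:
  fixes D :: "complex^'n^'n"
  assumes herm: "hermitian D" and nonneg: "\<And>u l. u \<noteq> 0 \<Longrightarrow> D *v u = l *\<^sub>R u \<Longrightarrow> 0 \<le> l"
  shows "psd D"
proof -
  obtain v :: "'n \<Rightarrow> complex^'n" and lam
    where on: "orthonormal_on UNIV v" and eig: "\<And>i. D *v v i = lam i *\<^sub>R v i"
    using hermitian_orthonormal_eigenbasis herm by metis
  have "0 \<le> lam i" for i
    using nonneg[OF orthonormal_on_nonzero[OF on] eig] by simp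
  then have "psd (cols_mat v ** diag_mat lam ** adjoint_mat (cols_mat v))"
    by (intro psd_unitary_conj psd_diag_mat)
  then show ?thesis
    using hermitian_eq_diag_conj[OF on eig] by simp
qed

lemma psd_sqrt_exists:
  fixes X :: "complex^'n^'n"
  assumes "psd X"
  shows "\<exists>S. psd S \<and> S ** S = X"
proof -
  obtain v :: "'n \<Rightarrow> complex^'n" and lam
    where on: "orthonormal_on UNIV v" and eig: "\<And>i. X *v v i = lam i *\<^sub>R v i"
    using hermitian_orthonormal_eigenbasis assms psd_def by metis
  have nn: "0 \<le> lam i" for i
    using psd_eigenvalue_nonneg[OF assms orthonormal_on_nonzero[OF on] eig] by simp
  define U where "U = cols_mat v"
  define R where "R = diag_mat (\<lambda>i. sqrt (lam i))"
  have "(U ** R ** adjoint_mat U) ** (U ** R ** adjoint_mat U)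
                 = U ** (R ** (adjoint_mat U ** U) ** R) ** adjoint_mat U"
    by (simp add: matrix_mul_assoc)
  also have "\<dots> = U ** diag_mat lam ** adjoint_mat U"
    using nn by (simp add: U_def R_def cols_mat_unitary(1)[OF on] diag_mat_mult)
  also have "\<dots> = X"
    unfolding U_def by (rule hermitian_eq_diag_conj[OF on eig, symmetric])
  moreover have "psd (U ** R ** adjoint_mat U)"
    unfolding R_def using nn by (intro psd_unitary_conj psd_diag_mat) simp
  ultimately show ?thesis by blast
qed

lemma psd_square_eq_eigenvector:
  assumes P: "psd P" and PQ: "P ** P = Q ** Q" and Qu: "Q *v u = l *\<^sub>R u" and l: "0 \<le> l"
  shows "P *v u = l *\<^sub>R u"
proof -
  have hP: "hermitian P"
    using P by (simp add: psd_def)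
  have "P *v (P *v u) = Q *v (Q *v u)"
    by (simp add: matrix_vector_mul_assoc PQ)
  then have PPu: "P *v (P *v u) = (l * l) *\<^sub>R u"
    by (simp add: Qu matrix_vector_mult_scaleR_complex)
  define w where "w = P *v u - l *\<^sub>R u"
  have "P *v w = - l *\<^sub>R w"
    by (simp add: w_def matrix_vector_mult_diff_distrib matrix_vector_mult_scaleR_complex PPu
        algebra_simps)
  then have "quad_form P w = - l * (norm w)^2"
    by (simp add: quad_form_def power2_norm_eq_inner)
  moreover have "0 \<le> quad_form P w"
    using P by (simp add: psd_iff_quad_form)
  ultimately have "l * (norm w)^2 \<le> 0"
    by simp
  then have "l = 0 \<or> w = 0"
    using l by (auto simp: mult_le_0_iff)
  then show ?thesis
  proof
    assume "l = 0"
    then have "inner (P *v u) (P *v u) = 0"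
      using PPu by (simp add: inner_hermitian[OF hP, symmetric])
    with \<open>l = 0\<close> show ?thesis by simp
  qed (simp add: w_def)
qed

lemma psd_square_eq_imp_eq:
  fixes P Q :: "complex^'n^'n"
  assumes P: "psd P" and Q: "psd Q" and PQ: "P ** P = Q ** Q"
  shows "P = Q"
proof -
  obtain v :: "'n \<Rightarrow> complex^'n" and lam
    where on: "orthonormal_on UNIV v" and eig: "\<And>i. Q *v v i = lam i *\<^sub>R v i"
    using hermitian_orthonormal_eigenbasis Q psd_def by metis
  have "0 \<le> lam i" for i
    using psd_eigenvalue_nonneg[OF Q orthonormal_on_nonzero[OF on] eig] by simp
  then have "P *v v i = lam i *\<^sub>R v i" for i
    using psd_square_eq_eigenvector[OF P PQ eig] by blast
  then show ?thesis
    using hermitian_eq_diag_conj[OF on, of P] hermitian_eq_diag_conj[OF on eig] by simp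
qed

lemma
  assumes "psd X"
  shows psd_msqrt: "psd (msqrt X)" and msqrt_mult_msqrt: "msqrt X ** msqrt X = X"
proof -
  have "\<exists>!S. psd S \<and> S ** S = X"
    using psd_sqrt_exists[OF assms] psd_square_eq_imp_eq by metis
  then have "psd (msqrt X) \<and> msqrt X ** msqrt X = X"
    unfolding msqrt_def by (rule theI')
  then show "psd (msqrt X)" "msqrt X ** msqrt X = X" by auto
qed

section \<open>Matrix inequalities\<close>

lemma psd_inner_square_le:
  assumes "psd P"
  shows "(inner (P *v x) y)^2 \<le> quad_form P x * quad_form P y"
proof (rule quadratic_nonneg_imp_discriminant_le)
  fix t :: real
  have "0 \<le> quad_form P (x + t *\<^sub>R y)"
    using assms by (simp add: psd_iff_quad_form)
  then show "0 \<le> quad_form P x + 2 * t * inner (P *v x) y + t^2 * quad_form P y"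
    using assms by (simp add: psd_def quad_form_add_vector)
  show "0 \<le> quad_form P y"
    using assms by (simp add: psd_iff_quad_form)
qed

lemma psd_square_le_scaleR:
  assumes P: "psd P" and bound: "P \<le>\<^sub>L c *\<^sub>R mat 1"
  shows "P ** P \<le>\<^sub>L c *\<^sub>R P"
proof -
  have hP: "hermitian P"
    using P by (simp add: psd_def)
  have qP: "0 \<le> quad_form P y" and le: "quad_form P y \<le> c * (norm y)^2" for y
    using P bound by (simp_all add: psd_iff_quad_form loewner_le_iff_quad_form quad_form_scaleR
        quad_form_mat_1)
  have "0 \<le> c"
    using order_trans[OF qP le, of "\<chi> i. 1"] by (simp add: zero_le_mult_iff vec_eq_iff)
  have "(norm (P *v x))^2 \<le> c * quad_form P x" for x
  proof (cases "P *v x = 0")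
    case True
    then show ?thesis
      using qP \<open>0 \<le> c\<close> by simp
  next
    case False
    define z where "z = P *v x"
    have "((norm z)^2)^2 = (inner (P *v x) z)^2"
      by (simp add: z_def power2_norm_eq_inner)
    also have "\<dots> \<le> quad_form P x * quad_form P z"
      by (rule psd_inner_square_le[OF P])
    also have "\<dots> \<le> quad_form P x * (c * (norm z)^2)"
      using qP le by (intro mult_left_mono)
    finally have "(norm z)^2 * (norm z)^2 \<le> (c * quad_form P x) * (norm z)^2"
      by (simp add: power2_eq_square mult_ac)
    moreover have "0 < (norm z)^2"
      using False by (simp add: z_def)
    ultimately show ?thesis
      unfolding z_def by (rule mult_right_le_imp_le)
  qed
  then show ?thesis
    by (simp add: loewner_le_iff_quad_form hP hermitian_square hermitian_scaleR quad_form_square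
        quad_form_scaleR)
qed

text \<open>The operator form of \<open>(a - m) (M - a) \<ge> 0\<close>.\<close>

lemma square_le_affine_of_loewner_bounds:
  assumes lower: "m *\<^sub>R mat 1 \<le>\<^sub>L A" and upper: "A \<le>\<^sub>L M *\<^sub>R mat 1"
  shows "A ** A \<le>\<^sub>L (M + m) *\<^sub>R A - (M * m) *\<^sub>R mat 1"
proof -
  define P where "P = A - m *\<^sub>R mat 1"
  have hA: "hermitian A"
    using lower by (simp add: loewner_le_def)
  have "psd P"
    using lower by (simp add: P_def loewner_le_def)
  moreover have "P \<le>\<^sub>L (M - m) *\<^sub>R mat 1"
    using upper by (simp add: P_def loewner_le_def hermitian_diff hermitian_scaleR hermitian_mat_1
        algebra_simps)
  ultimately have "P ** P \<le>\<^sub>L (M - m) *\<^sub>R P"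
    by (rule psd_square_le_scaleR)
  moreover have "quad_form (P ** P) x = (norm (A *v x))^2 - 2 * m * quad_form A x + m^2 * (norm x)^2"
    for x
  proof -
    have "hermitian P"
      using \<open>psd P\<close> by (simp add: psd_def)
    then have "quad_form (P ** P) x = (norm (A *v x - m *\<^sub>R x))^2"
      by (simp add: quad_form_square P_def matrix_vector_mult_diff_rdistrib scaleR_matrix_vector_mult)
    then show ?thesis
      by (simp add: power2_norm_diff_scaleR quad_form_def inner_commute)
  qed
  ultimately have "(norm (A *v x))^2 - 2 * m * quad_form A x + m^2 * (norm x)^2
                    \<le> (M - m) * quad_form P x" for x
    by (simp add: loewner_le_iff_quad_form quad_form_scaleR)
  moreover have "quad_form P x = quad_form A x - m * (norm x)^2" for x
    by (simp add: P_def quad_form_diff quad_form_scaleR quad_form_mat_1)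
  ultimately have "(norm (A *v x))^2 \<le> (M + m) * quad_form A x - M * m * (norm x)^2" for x
    by (simp add: algebra_simps power2_eq_square)
  then show ?thesis
    using hA by (simp add: loewner_le_iff_quad_form hermitian_square hermitian_diff hermitian_scaleR
        hermitian_mat_1 quad_form_square quad_form_diff quad_form_scaleR quad_form_mat_1)
qed

text \<open>For an eigenvector \<open>u\<close> of \<open>R - P\<close> with eigenvalue \<open>l\<close>,
  \<open>|R u|\<^sup>2 - |P u|\<^sup>2 = l (u\<^sup>* R u + u\<^sup>* P u)\<close> and \<open>u\<^sup>* R u - u\<^sup>* P u = l |u|\<^sup>2\<close>;
  for positive semidefinite \<open>P\<close> and \<open>R\<close> this forces \<open>l \<ge> 0\<close>.\<close>

lemma psd_le_of_square_le:
  assumes P: "psd P" and R: "psd R" and sq: "P ** P \<le>\<^sub>L R ** R"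
  shows "P \<le>\<^sub>L R"
proof -
  have hP: "hermitian P" and hR: "hermitian R"
    using P R by (simp_all add: psd_def)
  have "psd (R - P)"
  proof (rule psd_of_eigenvalues_nonneg)
    show "hermitian (R - P)"
      by (rule hermitian_diff[OF hR hP])
    fix u l
    assume u: "u \<noteq> 0" and eig: "(R - P) *v u = l *\<^sub>R u"
    show "0 \<le> l"
    proof (rule ccontr)
      assume "\<not> 0 \<le> l"
      have Pu: "P *v u = R *v u - l *\<^sub>R u"
        using eig by (simp add: matrix_vector_mult_diff_rdistrib algebra_simps)
      have qP: "quad_form P u = quad_form R u - l * (norm u)^2"
        by (simp add: quad_form_def Pu inner_diff_right power2_norm_eq_inner)
      have "(norm (P *v u))^2 = (norm (R *v u))^2 - l * (quad_form R u + quad_form P u)"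
        unfolding Pu power2_norm_diff_scaleR qP
        by (simp add: quad_form_def inner_commute power2_eq_square algebra_simps)
      moreover have "(norm (P *v u))^2 \<le> (norm (R *v u))^2"
        using sq hP hR by (simp add: loewner_le_iff_quad_form quad_form_square)
      ultimately have "quad_form R u + quad_form P u \<le> 0"
        using \<open>\<not> 0 \<le> l\<close> by (auto simp: zero_le_mult_iff)
      moreover have "0 \<le> quad_form R u" "0 \<le> quad_form P u"
        using P R by (simp_all add: psd_iff_quad_form)
      ultimately have "l * (norm u)^2 = 0"
        using qP by linarith
      with u \<open>\<not> 0 \<le> l\<close> show False
        by simp
    qed
  qed
  then show ?thesis
    by (simp add: loewner_le_def hP hR)
qed

lemma msqrt_le: "psd X \<Longrightarrow> psd R \<Longrightarrow> X \<le>\<^sub>L R ** R \<Longrightarrow> msqrt X \<le>\<^sub>L R"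
  by (simp add: psd_le_of_square_le psd_msqrt msqrt_mult_msqrt)

lemma le_msqrt: "psd P \<Longrightarrow> psd X \<Longrightarrow> P ** P \<le>\<^sub>L X \<Longrightarrow> P \<le>\<^sub>L msqrt X"
  by (simp add: psd_le_of_square_le psd_msqrt msqrt_mult_msqrt)

lemma square_weighted_sum_le:
  assumes "\<And>i. i \<in> I \<Longrightarrow> hermitian (C i)" and "\<And>i. i \<in> I \<Longrightarrow> 0 \<le> w i" and "sum w I = 1"
  shows "(\<Sum>i\<in>I. w i *\<^sub>R C i) ** (\<Sum>i\<in>I. w i *\<^sub>R C i) \<le>\<^sub>L (\<Sum>i\<in>I. w i *\<^sub>R (C i ** C i))"
proof -
  have herm: "hermitian (\<Sum>i\<in>I. w i *\<^sub>R C i)"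
    using assms(1) by (intro hermitian_sum hermitian_scaleR)
  have "(norm ((\<Sum>i\<in>I. w i *\<^sub>R C i) *v x))^2 \<le> (\<Sum>i\<in>I. w i * (norm (C i *v x))^2)" for x
    using power2_norm_weighted_sum_le[OF assms(2,3), of "\<lambda>i. C i *v x"]
    by (simp add: sum_matrix_vector_mult scaleR_matrix_vector_mult)
  then show ?thesis
    using assms(1) herm
    by (simp add: loewner_le_iff_quad_form quad_form_square quad_form_sum quad_form_scaleR
        hermitian_sum hermitian_scaleR hermitian_square)
qed

text \<open>The operator form of \<open>(h - t)\<^sup>2 \<ge> 0\<close>.\<close>

lemma affine_le_square:
  assumes "hermitian H"
  shows "(2 * t) *\<^sub>R H - t^2 *\<^sub>R mat 1 \<le>\<^sub>L H ** H"
proof -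
  have "2 * t * quad_form H x - t^2 * (norm x)^2 \<le> (norm (H *v x))^2" for x
    using power2_norm_diff_scaleR[of "H *v x" t x] zero_le_power2[of "norm (H *v x - t *\<^sub>R x)"]
    by (simp add: quad_form_def inner_commute)
  then show ?thesis
    using assms by (simp add: loewner_le_iff_quad_form quad_form_square quad_form_diff
        quad_form_scaleR quad_form_mat_1 hermitian_diff hermitian_scaleR hermitian_mat_1
        hermitian_square)
qed

lemma weighted_sum_squares_le_affine:
  assumes w: "\<And>i. i \<in> I \<Longrightarrow> 0 \<le> w i" and sum_w: "sum w I = 1"
    and bounds: "\<And>i. i \<in> I \<Longrightarrow> m *\<^sub>R mat 1 \<le>\<^sub>L A i \<and> A i \<le>\<^sub>L M *\<^sub>R mat 1"
  shows "(\<Sum>i\<in>I. w i *\<^sub>R (A i ** A i))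
           \<le>\<^sub>L (M + m) *\<^sub>R (\<Sum>i\<in>I. w i *\<^sub>R A i) - (M * m) *\<^sub>R mat 1"
proof -
  have "(\<Sum>i\<in>I. w i *\<^sub>R (A i ** A i))
          \<le>\<^sub>L (\<Sum>i\<in>I. w i *\<^sub>R ((M + m) *\<^sub>R A i - (M * m) *\<^sub>R mat 1))"
    using bounds by (intro loewner_le_weighted_sum w square_le_affine_of_loewner_bounds) auto
  also have "(\<Sum>i\<in>I. w i *\<^sub>R ((M + m) *\<^sub>R A i - (M * m) *\<^sub>R mat 1))
               = (M + m) *\<^sub>R (\<Sum>i\<in>I. w i *\<^sub>R A i) - (M * m) *\<^sub>R mat 1"
    using sum_w by (simp add: scaleR_diff_right sum_subtractf scaleR_sum_right mult.commute
        flip: scaleR_sum_left sum_distrib_right)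
  finally show ?thesis .
qed

lemma psd_weighted_sum_squares:
  assumes "\<And>i. i \<in> I \<Longrightarrow> 0 \<le> w i" and "\<And>i. i \<in> I \<Longrightarrow> hermitian (A i)"
  shows "psd (\<Sum>i\<in>I. w i *\<^sub>R (A i ** A i))"
  using assms by (intro psd_sum psd_scaleR psd_square) auto

lemma msqrt_weighted_sum_squares_le_scaleR:
  fixes A :: "'i \<Rightarrow> complex^'n^'n"
  assumes m: "0 < m" "m \<le> M"
    and w: "\<And>i. i \<in> I \<Longrightarrow> 0 \<le> w i" and sum_w: "sum w I = 1"
    and bounds: "\<And>i. i \<in> I \<Longrightarrow> m *\<^sub>R mat 1 \<le>\<^sub>L A i \<and> A i \<le>\<^sub>L M *\<^sub>R mat 1"
  shows "msqrt (\<Sum>i\<in>I. w i *\<^sub>R (A i ** A i))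
           \<le>\<^sub>L ((M + m) / (2 * sqrt (M * m))) *\<^sub>R (\<Sum>i\<in>I. w i *\<^sub>R A i)"
proof -
  define X where "X = (\<Sum>i\<in>I. w i *\<^sub>R (A i ** A i))"
  define Abar where "Abar = (\<Sum>i\<in>I. w i *\<^sub>R A i)"
  define c where "c = (M + m) / (2 * sqrt (M * m))"
  define t where "t = sqrt (M * m)"
  have "psd X"
    unfolding X_def using w bounds by (intro psd_weighted_sum_squares) (auto simp: loewner_le_def)
  have "psd Abar"
    unfolding Abar_def using m(1) w sum_w bounds
    by (intro psd_of_scaleR_mat_1_le[of m] scaleR_mat_1_le_weighted_sum) auto
  then have "psd (c *\<^sub>R Abar)"
    using m by (simp add: c_def psd_scaleR)
  have "0 < t"
    using m by (simp add: t_def)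
  then have eq: "(M + m) *\<^sub>R Abar - (M * m) *\<^sub>R mat 1 = (2 * t) *\<^sub>R (c *\<^sub>R Abar) - t^2 *\<^sub>R mat 1"
    using m by (simp add: c_def t_def)
  have "X \<le>\<^sub>L (M + m) *\<^sub>R Abar - (M * m) *\<^sub>R mat 1"
    unfolding X_def Abar_def by (rule weighted_sum_squares_le_affine[OF w sum_w bounds])
  then have "X \<le>\<^sub>L (2 * t) *\<^sub>R (c *\<^sub>R Abar) - t^2 *\<^sub>R mat 1"
    unfolding eq .
  also have "\<dots> \<le>\<^sub>L (c *\<^sub>R Abar) ** (c *\<^sub>R Abar)"
    by (intro affine_le_square) (use \<open>psd Abar\<close> in \<open>simp add: psd_def hermitian_scaleR\<close>)
  finally show ?thesis
    using msqrt_le[OF \<open>psd X\<close> \<open>psd (c *\<^sub>R Abar)\<close>] unfolding X_def Abar_def c_def by blast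
qed

lemma msqrt_weighted_sum_squares_le_add:
  fixes A :: "'i \<Rightarrow> complex^'n^'n"
  assumes m: "0 < m" "m \<le> M"
    and w: "\<And>i. i \<in> I \<Longrightarrow> 0 \<le> w i" and sum_w: "sum w I = 1"
    and bounds: "\<And>i. i \<in> I \<Longrightarrow> m *\<^sub>R mat 1 \<le>\<^sub>L A i \<and> A i \<le>\<^sub>L M *\<^sub>R mat 1"
  shows "msqrt (\<Sum>i\<in>I. w i *\<^sub>R (A i ** A i))
           \<le>\<^sub>L (\<Sum>i\<in>I. w i *\<^sub>R A i) + ((M - m)^2 / (4 * (M + m))) *\<^sub>R mat 1"
proof -
  define X where "X = (\<Sum>i\<in>I. w i *\<^sub>R (A i ** A i))"
  define Abar where "Abar = (\<Sum>i\<in>I. w i *\<^sub>R A i)"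
  define d where "d = (M - m)^2 / (4 * (M + m))"
  define t where "t = (M + m) / 2"
  have "psd X"
    unfolding X_def using w bounds by (intro psd_weighted_sum_squares) (auto simp: loewner_le_def)
  have "psd (Abar + d *\<^sub>R mat 1)"
    unfolding Abar_def d_def using m w sum_w bounds
    by (intro psd_add psd_scaleR psd_mat_1 psd_of_scaleR_mat_1_le[of m]
        scaleR_mat_1_le_weighted_sum) auto
  have "(M + m) * d - t^2 = - (M * m)" and "2 * t = M + m"
    using m by (simp_all add: d_def t_def field_simps power2_eq_square)
  have "(2 * t) *\<^sub>R (Abar + d *\<^sub>R mat 1) - t^2 *\<^sub>R mat 1
        = (2 * t) *\<^sub>R Abar + (2 * t * d - t^2) *\<^sub>R mat 1"
    by (simp add: algebra_simps)
  also have "\<dots> = (M + m) *\<^sub>R Abar - (M * m) *\<^sub>R mat 1"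
    by (simp add: \<open>2 * t = M + m\<close> \<open>(M + m) * d - t^2 = - (M * m)\<close>)
  finally have eq: "(M + m) *\<^sub>R Abar - (M * m) *\<^sub>R mat 1
                    = (2 * t) *\<^sub>R (Abar + d *\<^sub>R mat 1) - t^2 *\<^sub>R mat 1" ..
  have "X \<le>\<^sub>L (M + m) *\<^sub>R Abar - (M * m) *\<^sub>R mat 1"
    unfolding X_def Abar_def by (rule weighted_sum_squares_le_affine[OF w sum_w bounds])
  then have "X \<le>\<^sub>L (2 * t) *\<^sub>R (Abar + d *\<^sub>R mat 1) - t^2 *\<^sub>R mat 1"
    unfolding eq .
  also have "\<dots> \<le>\<^sub>L (Abar + d *\<^sub>R mat 1) ** (Abar + d *\<^sub>R mat 1)"
    by (intro affine_le_square) (use \<open>psd (Abar + d *\<^sub>R mat 1)\<close> in \<open>simp add: psd_def\<close>)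
  finally show ?thesis
    using msqrt_le[OF \<open>psd X\<close> \<open>psd (Abar + d *\<^sub>R mat 1)\<close>] unfolding X_def Abar_def d_def by blast
qed

lemma weighted_sum_le_msqrt_weighted_sum_squares:
  assumes "\<And>i. i \<in> I \<Longrightarrow> psd (C i)" and "\<And>i. i \<in> I \<Longrightarrow> 0 \<le> w i" and "sum w I = 1"
  shows "(\<Sum>i\<in>I. w i *\<^sub>R C i) \<le>\<^sub>L msqrt (\<Sum>i\<in>I. w i *\<^sub>R (C i ** C i))"
proof (rule le_msqrt)
  show "psd (\<Sum>i\<in>I. w i *\<^sub>R C i)"
    using assms(1,2) by (intro psd_sum psd_scaleR) auto
  show "psd (\<Sum>i\<in>I. w i *\<^sub>R (C i ** C i))"
    using assms(1,2) by (intro psd_weighted_sum_squares) (auto simp: psd_def)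
  show "(\<Sum>i\<in>I. w i *\<^sub>R C i) ** (\<Sum>i\<in>I. w i *\<^sub>R C i) \<le>\<^sub>L (\<Sum>i\<in>I. w i *\<^sub>R (C i ** C i))"
    using assms by (intro square_weighted_sum_le) (auto simp: psd_def)
qed

theorem mainTheorem9:
  fixes A B :: "nat \<Rightarrow> complex^'n^'n" and w :: "nat \<Rightarrow> real"
    and k :: nat and m M :: real
  assumes "0 < m" and "m < M"
    and "\<And>i. i \<in> {1..k} \<Longrightarrow> hermitian (A i) \<and> hermitian (B i)"
    and "\<And>i. i \<in> {1..k} \<Longrightarrow> m *\<^sub>R mat 1 \<le>\<^sub>L A i \<and> A i \<le>\<^sub>L M *\<^sub>R mat 1"
    and "\<And>i. i \<in> {1..k} \<Longrightarrow> m *\<^sub>R mat 1 \<le>\<^sub>L B i \<and> B i \<le>\<^sub>L M *\<^sub>R mat 1"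
    and "\<And>i. i \<in> {1..k} \<Longrightarrow> 0 < w i"
    and "(\<Sum>i=1..k. w i) = 1"
  shows "(msqrt (\<Sum>i=1..k. w i *\<^sub>R (A i ** A i)) + msqrt (\<Sum>i=1..k. w i *\<^sub>R (B i ** B i))
           \<le>\<^sub>L ((M + m) / (2 * sqrt (M * m))) *\<^sub>R
               msqrt (\<Sum>i=1..k. w i *\<^sub>R ((A i + B i) ** (A i + B i))))
         \<and> (msqrt (\<Sum>i=1..k. w i *\<^sub>R (A i ** A i)) + msqrt (\<Sum>i=1..k. w i *\<^sub>R (B i ** B i))
           \<le>\<^sub>L ((M - m)^2 / (2 * (M + m))) *\<^sub>R mat 1
               + msqrt (\<Sum>i=1..k. w i *\<^sub>R ((A i + B i) ** (A i + B i))))"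
proof -
  let ?c = "(M + m) / (2 * sqrt (M * m))" and ?d = "(M - m)^2 / (4 * (M + m))"
  let ?Abar = "\<Sum>i=1..k. w i *\<^sub>R A i" and ?Bbar = "\<Sum>i=1..k. w i *\<^sub>R B i"
  let ?S = "msqrt (\<Sum>i=1..k. w i *\<^sub>R (A i ** A i)) + msqrt (\<Sum>i=1..k. w i *\<^sub>R (B i ** B i))"
  let ?Z = "msqrt (\<Sum>i=1..k. w i *\<^sub>R ((A i + B i) ** (A i + B i)))"
  note m = \<open>0 < m\<close> less_imp_le[OF \<open>m < M\<close>]
  have w: "\<And>i. i \<in> {1..k} \<Longrightarrow> 0 \<le> w i"
    using assms(6) less_imp_le by blast
  have "psd (A i + B i)" if "i \<in> {1..k}" for i
    using m assms(4,5)[OF that] by (intro psd_add psd_of_scaleR_mat_1_le[of m]) auto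
  from weighted_sum_le_msqrt_weighted_sum_squares[OF this w assms(7)]
  have mean_le: "?Abar + ?Bbar \<le>\<^sub>L ?Z"
    by (simp add: scaleR_add_right sum.distrib)
  show ?thesis
  proof
    have "?S \<le>\<^sub>L ?c *\<^sub>R ?Abar + ?c *\<^sub>R ?Bbar"
      by (intro loewner_le_add msqrt_weighted_sum_squares_le_scaleR m w assms(4,5,7))
    also have "\<dots> \<le>\<^sub>L ?c *\<^sub>R ?Z"
      using m mean_le by (simp add: loewner_le_scaleR flip: scaleR_add_right)
    finally show "?S \<le>\<^sub>L ?c *\<^sub>R ?Z" .
  next
    have "?S \<le>\<^sub>L (?Abar + ?d *\<^sub>R mat 1) + (?Bbar + ?d *\<^sub>R mat 1)"
      by (intro loewner_le_add msqrt_weighted_sum_squares_le_add m w assms(4,5,7))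
    also have "\<dots> = (?d + ?d) *\<^sub>R mat 1 + (?Abar + ?Bbar)"
      by (simp only: scaleR_left_distrib) (simp add: algebra_simps)
    also have "?d + ?d = (M - m)^2 / (2 * (M + m))"
      by (simp add: divide_simps)
    also have "((M - m)^2 / (2 * (M + m))) *\<^sub>R mat 1 + (?Abar + ?Bbar)
               \<le>\<^sub>L ((M - m)^2 / (2 * (M + m))) *\<^sub>R mat 1 + ?Z"
      by (intro loewner_le_add loewner_le_refl hermitian_scaleR hermitian_mat_1 mean_le)
    finally show "?S \<le>\<^sub>L ((M - m)^2 / (2 * (M + m))) *\<^sub>R mat 1 + ?Z" .
  qed
qed

end
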